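(* Let $F,f,k$ be as in the standing assumptions and suppose (A1)–(A5) hold. For $\alpha>0$ let $v^\alpha$ be the viscosity solution of $$\alpha v^\alpha(x,\xi)+F(x,Dv^\alpha(x,\xi),\xi)+\int_I k(\xi,\eta)\big(v^\alpha(x,\xi)-v^\alpha(x,\eta)\big)\,d\eta=f(x,\xi)\quad\text{in }\mathbb{T}^d\times I.$$ Then $v^\alpha(x,\xi)=0$ for all $(x,\xi)\in\mathcal{Z}$ and all $\alpha>0$, where $\tilde{\mathcal{A}}:=\{x\in\mathbb{T}^d: f(x,\xi)=0\text{ for a.e. }\xi\in I\}$ and $\mathcal{Z}:=\{(x,\xi)\in\tilde{\mathcal{A}}\times I: f(x,\xi)=0\}$.
   Context: $I\subset\mathbb{R}$ finite interval with $|I|=1$; $k:I\times I\to\mathbb{R}$ Borel measurable with $0<k_0\le k\le k_1$. $F\in C(\mathbb{T}^d\times\mathbb{R}^d)\otimes\mathcal{B}(I)$ (continuous in $(x,p)$ for each $\xi$, Borel in $\xi$) with $F(\cdot,p,\cdot)$ bounded for each $p$; $f\in C(\mathbb{T}^d)\otimes\mathcal{B}(I)$ bounded. The equation is understood in the viscosity sense (test functions $\phi\in C^1(\mathbb{T}^d)$ touching $v(\cdot,\xi)$ for fixed $\xi$), and has a unique viscosity solution $v^\alpha\in C(\mathbb{T}^d)\otimes\mathcal{B}(I)$. Assumptions: (A1) $C_1|p|^m-C_2\le F(x,p,\xi)$ for constants $C_1,C_2>0$, $m>1$. (A2) $f\ge0$ and $\mathcal{A}:=\{x: f(x,\xi)=0\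 \forall\xi\in I\}\neq\emptyset$. (A3) $p\mapsto F(x,p,\xi)$ convex. (A4) $F\ge0$ and $F(x,0,\xi)=0$. (A5) a modulus $\omega$ with $|f(x,\xi)-f(y,\xi)|\le\omega(|x-y|)$, and for each $R>0$ a modulus $\omega_R$ with $|F(x,p,\xi)-F(y,q,\xi)|\le\omega_R(|x-y|+|p-q|)$ for $p,q\in B(0,R)$, uniformly in $\xi$. *)

theory Defs
  imports "HOL-Analysis.Analysis"
begin

text \<open>Functions on the torus T^d = R^d / Z^d are represented as Z^d-periodic
functions on real^'d.\<close>
definition zd_periodic :: "(real^'d \<Rightarrow> 'b) \<Rightarrow> bool" where
  "zd_periodic g \<longleftrightarrow> (\<forall>x i. g (x + axis i 1) = g x)"

definition modulus :: "(real \<Rightarrow> real) \<Rightarrow> bool" where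
  "modulus \<omega> \<longleftrightarrow> (\<forall>r\<ge>0. \<omega> r \<ge> 0) \<and> mono_on {0..} \<omega> \<and> \<omega> 0 = 0
      \<and> (\<omega> \<longlongrightarrow> 0) (at_right 0)"

definition C1_test :: "(real^'d \<Rightarrow> real) \<Rightarrow> (real^'d \<Rightarrow> real^'d) \<Rightarrow> bool" where
  "C1_test \<phi> D\<phi> \<longleftrightarrow> zd_periodic \<phi> \<and> continuous_on UNIV D\<phi> \<and>
      (\<forall>x. (\<phi> has_derivative (\<lambda>h. D\<phi> x \<bullet> h)) (at x))"

definition nl_op ::
  "real \<Rightarrow> (real^'d \<Rightarrow> real^'d \<Rightarrow> real \<Rightarrow> real) \<Rightarrow> (real \<Rightarrow> real \<Rightarrow> real) \<Rightarrow> real set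
    \<Rightarrow> (real^'d \<Rightarrow> real \<Rightarrow> real) \<Rightarrow> real^'d \<Rightarrow> real \<Rightarrow> real^'d \<Rightarrow> real" where
  "nl_op \<alpha> F k I v x \<xi> p =
     \<alpha> * v x \<xi> + F x p \<xi> + (LINT \<eta>:I|lborel. k \<xi> \<eta> * (v x \<xi> - v x \<eta>))"

definition visc_subsol where
  "visc_subsol \<alpha> F k f I v \<longleftrightarrow>
    (\<forall>\<xi>\<in>I. \<forall>\<phi> D\<phi> x0. C1_test \<phi> D\<phi> \<and>
        (\<exists>e>0. \<forall>y\<in>ball x0 e. v y \<xi> - \<phi> y \<le> v x0 \<xi> - \<phi> x0)
        \<longrightarrow> nl_op \<alpha> F k I v x0 \<xi> (D\<phi> x0) \<le> f x0 \<xi>)"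

definition visc_supersol where
  "visc_supersol \<alpha> F k f I v \<longleftrightarrow>
    (\<forall>\<xi>\<in>I. \<forall>\<phi> D\<phi> x0. C1_test \<phi> D\<phi> \<and>
        (\<exists>e>0. \<forall>y\<in>ball x0 e. v y \<xi> - \<phi> y \<ge> v x0 \<xi> - \<phi> x0)
        \<longrightarrow> nl_op \<alpha> F k I v x0 \<xi> (D\<phi> x0) \<ge> f x0 \<xi>)"

definition visc_sol ::
  "real \<Rightarrow> (real^'d \<Rightarrow> real^'d \<Rightarrow> real \<Rightarrow> real) \<Rightarrow> (real \<Rightarrow> real \<Rightarrow> real)
    \<Rightarrow> (real^'d \<Rightarrow> real \<Rightarrow> real) \<Rightarrow> real set \<Rightarrow> (real^'d \<Rightarrow> real \<Rightarrow> real) \<Rightarrow> bool" where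
  "visc_sol \<alpha> F k f I v \<longleftrightarrow>
     (\<forall>\<xi>\<in>I. continuous_on UNIV (\<lambda>x. v x \<xi>) \<and> zd_periodic (\<lambda>x. v x \<xi>)) \<and>
     (\<forall>x. set_borel_measurable lborel I (\<lambda>\<xi>. v x \<xi>)) \<and>
     (\<exists>B. \<forall>x. \<forall>\<xi>\<in>I. \<bar>v x \<xi>\<bar> \<le> B) \<and>
     visc_subsol \<alpha> F k f I v \<and> visc_supersol \<alpha> F k f I v"

end

theory Submission
  imports Defs
begin

(*
  Testing the supersolution property with constant test functions at minimum points of
  v(.,xi), which exist by periodicity, shows v >= 0.  Testing the subsolution property with
  periodic quadratic penalisations centred at x and dropping F >= 0 gives, in the limit, the
  pointwise inequality  alpha v(x,xi) + int_I k(xi,eta) (v(x,xi) - v(x,eta)) deta <= f(x,xi).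
  For x in the set A~ the zero set G of f(x,.) has full measure in I, so at points of G where
  v(x,.) almost attains its supremum M over G the integral is almost nonnegative, whence
  alpha M <= 0.
*)

lemma sin_ge_half:
  fixes w :: real
  assumes "0 \<le> w" "w \<le> 1"
  shows "w / 2 \<le> sin w"
proof -
  have "cos u - 1/2 \<ge> 0" if "0 \<le> u" "u \<le> w" for u
  proof -
    have "cos (pi/3) \<le> cos u"
      using that assms pi_gt3 by (intro cos_monotone_0_pi_le) auto
    then show ?thesis by (simp add: cos_60)
  qed
  then have "sin 0 - 0/2 \<le> sin w - w/2"
    by (intro DERIV_nonneg_imp_nondecreasing[OF assms(1)])
       (auto intro!: exI derivative_eq_intros)
  then show ?thesis by simp
qed

lemma square_le_one_minus_cos:
  fixes t :: real
  assumes "\<bar>t\<bar> \<le> 1/8"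
  shows "t^2 \<le> 1 - cos (2*pi*t)"
proof -
  have "pi * \<bar>t\<bar> \<le> 4 * (1/8)"
    using assms pi_less_4 by (intro mult_mono) auto
  then have "\<bar>pi*t\<bar> \<le> 1" by (simp add: abs_mult)
  then have "\<bar>pi*t\<bar> / 2 \<le> \<bar>sin (pi*t)\<bar>"
    using sin_ge_half[of "pi*t"] sin_ge_half[of "-(pi*t)"] by (cases "0 \<le> pi*t") auto
  then have sin_bound: "(pi*t/2)^2 \<le> sin (pi*t) ^ 2"
    by (metis abs_divide abs_numeral power2_abs power_mono abs_ge_zero)
  have "1 \<le> pi^2 / 2"
  proof -
    have "3 * 3 \<le> pi * pi" using pi_gt3 by (intro mult_mono) auto
    then show ?thesis by (simp add: power2_eq_square)
  qed
  then have "t^2 \<le> 2 * (pi*t/2)^2"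
    using mult_right_mono[of 1 "pi^2/2" "t^2"] by (simp add: power_divide power_mult_distrib)
  also have "\<dots> \<le> 2 * sin (pi*t) ^ 2"
    using sin_bound by simp
  also have "\<dots> = 1 - cos (2*pi*t)"
    using cos_double_sin[of "pi*t"] by (simp add: mult.assoc)
  finally show ?thesis .
qed

lemma zd_periodic_add_int_axis:
  fixes g :: "real^'d \<Rightarrow> 'b"
  assumes "zd_periodic g"
  shows "g (x + of_int n *\<^sub>R axis i 1) = g x"
proof -
  have shift_nat: "g (y + real m *\<^sub>R axis i 1) = g y" for y m
  proof (induction m)
    case (Suc m)
    have "y + real (Suc m) *\<^sub>R axis i 1 = (y + real m *\<^sub>R axis i 1) + axis i 1"
      by (simp add: algebra_simps)
    then show ?case using assms Suc unfolding zd_periodic_def by metis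
  qed simp
  show ?thesis
  proof (cases "0 \<le> n")
    case True
    then show ?thesis using shift_nat[of x "nat n"] by simp
  next
    case False
    then show ?thesis using shift_nat[of "x + of_int n *\<^sub>R axis i 1" "nat (- n)"] by simp
  qed
qed

lemma zd_periodic_add_Ints:
  fixes g :: "real^'d \<Rightarrow> 'b"
  assumes "zd_periodic g" "\<forall>i. c $ i \<in> \<int>"
  shows "g (x + c) = g x"
proof -
  have "g (x + (\<chi> i. if i \<in> A then c $ i else 0)) = g x" if "finite A" for A
    using that
  proof (induction A rule: finite_induct)
    case empty
    then show ?case by (simp add: zero_vec_def[symmetric])
  next
    case (insert j A)
    obtain n where n: "c $ j = of_int n" using assms(2) Ints_cases by metis
    have "x + (\<chi> i. if i \<in> insert j A then c $ i else 0)
        = (x + (\<chi> i. if i \<in> A then c $ i else 0)) + of_int n *\<^sub>R axis j 1"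
      using insert(2) n by (auto simp: vec_eq_iff axis_def)
    then show ?case
      using zd_periodic_add_int_axis[OF assms(1), of "x + (\<chi> i. if i \<in> A then c $ i else 0)"] insert(3)
      by (simp add: add.assoc)
  qed
  from this[of UNIV] show ?thesis by simp
qed

lemma zd_periodic_attains_inf:
  fixes g :: "real^'d \<Rightarrow> real"
  assumes "continuous_on UNIV g" "zd_periodic g"
  obtains x0 where "\<And>y. g x0 \<le> g y"
proof -
  have "(0::real^'d) \<in> cbox 0 1" by (simp add: mem_box_cart)
  then obtain x0 where x0: "\<And>z. z \<in> cbox 0 (1::real^'d) \<Longrightarrow> g x0 \<le> g z"
    using continuous_attains_inf[OF compact_cbox _ continuous_on_subset[OF assms(1)]] by blast
  have "g x0 \<le> g y" for y
  proof -
    define c :: "real^'d" where "c = (\<chi> i. - of_int \<lfloor>y $ i\<rfloor>)"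
    have "of_int \<lfloor>y $ i\<rfloor> \<le> y $ i" "y $ i < of_int \<lfloor>y $ i\<rfloor> + 1" for i
      by (simp_all add: of_int_floor_le real_of_int_floor_add_one_gt)
    then have "y + c \<in> cbox 0 1"
      by (auto simp: c_def mem_box_cart less_imp_le diff_le_eq add.commute)
    moreover have "g (y + c) = g y"
      by (rule zd_periodic_add_Ints[OF assms(2)]) (simp add: c_def)
    ultimately show ?thesis using x0 by metis
  qed
  then show ?thesis by (rule that)
qed

(* A Z^d-periodic substitute for s |y - x|^2, since test functions must be periodic. *)

definition periodic_penalty :: "real \<Rightarrow> real^'d \<Rightarrow> real^'d \<Rightarrow> real" where
  "periodic_penalty s x y = s * (\<Sum>i\<in>UNIV. 1 - cos (2*pi*(y$i - x$i)))"

definition periodic_penalty_grad :: "real \<Rightarrow> real^'d \<Rightarrow> real^'d \<Rightarrow> real^'d" where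
  "periodic_penalty_grad s x y = (\<chi> i. s * (2*pi * sin (2*pi*(y$i - x$i))))"

lemma periodic_penalty_self [simp]: "periodic_penalty s x x = 0"
  by (simp add: periodic_penalty_def)

lemma continuous_on_periodic_penalty: "continuous_on UNIV (periodic_penalty s x)"
  unfolding periodic_penalty_def by (intro continuous_intros)

lemma C1_test_periodic_penalty:
  "C1_test (periodic_penalty s x) (periodic_penalty_grad s (x::real^'d))"
  unfolding C1_test_def
proof (intro conjI allI)
  have "cos (2*pi*((y + axis j 1)$i - x$i)) = cos (2*pi*(y$i - x$i))" for y :: "real^'d" and i j
  proof (cases "i = j")
    case True
    then have "2*pi*((y + axis j 1)$i - x$i) = 2*pi*(y$i - x$i) + 2*pi"
      by (simp add: algebra_simps)
    then show ?thesis by (simp add: cos_periodic)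
  qed (simp add: axis_def)
  then show "zd_periodic (periodic_penalty s x)"
    by (simp add: zd_periodic_def periodic_penalty_def)
  show "continuous_on UNIV (periodic_penalty_grad s x)"
    unfolding periodic_penalty_grad_def by (intro continuous_intros)
  fix y :: "real^'d"
  have "((\<lambda>y. 1 - cos (2*pi*(y$i - x$i))) has_derivative
          (\<lambda>h. 2*pi * sin (2*pi*(y$i - x$i)) * h$i)) (at y)" for i
    using bounded_linear_imp_has_derivative[OF bounded_linear_vec_nth[of i]]
    by (auto intro!: derivative_eq_intros simp: algebra_simps)
  then have "(periodic_penalty s x has_derivative
      (\<lambda>h. s * (\<Sum>i\<in>UNIV. 2*pi * sin (2*pi*(y$i - x$i)) * h$i))) (at y)"
    unfolding periodic_penalty_def by (intro has_derivative_mult_right has_derivative_sum)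
  then show "(periodic_penalty s x has_derivative (\<lambda>h. periodic_penalty_grad s x y \<bullet> h)) (at y)"
    by (simp add: periodic_penalty_grad_def inner_vec_def sum_distrib_left mult.assoc)
qed

lemma periodic_penalty_ge_dist:
  fixes x y :: "real^'d"
  assumes "dist y x \<le> 1/8" "0 \<le> s"
  shows "s * (dist y x)^2 \<le> periodic_penalty s x y"
proof -
  have "(dist y x)^2 = (\<Sum>i\<in>UNIV. (y$i - x$i)^2)"
    by (simp only: dist_norm power2_norm_eq_inner) (simp add: inner_vec_def power2_eq_square)
  also have "\<dots> \<le> (\<Sum>i\<in>UNIV. 1 - cos (2*pi*(y$i - x$i)))"
  proof (rule sum_mono)
    fix i
    have "\<bar>(y - x)$i\<bar> \<le> 1/8"
      using component_le_norm_cart[of "y - x" i] assms(1) by (simp add: dist_norm)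
    then show "(y$i - x$i)^2 \<le> 1 - cos (2*pi*(y$i - x$i))"
      by (simp add: square_le_one_minus_cos)
  qed
  finally show ?thesis
    unfolding periodic_penalty_def using assms(2) by (rule mult_left_mono)
qed

lemma exists_penalized_local_max:
  fixes w :: "real^'d \<Rightarrow> real"
  assumes "continuous_on UNIV w" "\<And>y. \<bar>w y\<bar> \<le> B" "0 < \<epsilon>"
  obtains s y0 e where "dist y0 x < \<epsilon>" "0 < e"
    "\<And>y. y \<in> ball y0 e \<Longrightarrow> w y - periodic_penalty s x y \<le> w y0 - periodic_penalty s x y0"
proof -
  define R where "R = min \<epsilon> (1/8)"
  define t where "t = R/2"
  have R: "0 < R" "R \<le> \<epsilon>" "R \<le> 1/8" and t: "0 < t"
    using assms(3) by (auto simp: R_def t_def)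
  have B: "0 \<le> B" using assms(2) by (meson abs_ge_zero order_trans)
  define s where "s = (2*B + 1) / t^2"
  have s: "0 < s" using B t by (simp add: s_def)
  let ?G = "\<lambda>y. w y - periodic_penalty s x y"
  have "continuous_on (cball x R) ?G"
    by (intro continuous_on_diff continuous_on_subset[OF assms(1)]
        continuous_on_subset[OF continuous_on_periodic_penalty]) auto
  then obtain y0 where y0: "y0 \<in> cball x R" "\<And>y. y \<in> cball x R \<Longrightarrow> ?G y \<le> ?G y0"
    using continuous_attains_sup[OF compact_cball, of x R ?G] R by fastforce
  (* the maximiser beats the centre, so the penalty at y0 is at most the oscillation 2B of w *)
  have "periodic_penalty s x y0 \<le> 2*B"
    using y0(2)[of x] R assms(2)[of x] assms(2)[of y0] by (simp add: abs_le_iff)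
  moreover have "s * (dist y0 x)^2 \<le> periodic_penalty s x y0"
    using y0(1) R s by (intro periodic_penalty_ge_dist) (auto simp: dist_commute)
  ultimately have "s * (dist y0 x)^2 \<le> 2*B" by linarith
  then have "(dist y0 x)^2 * (2*B + 1) \<le> 2*B * t^2"
    using t by (simp add: s_def field_simps)
  also have "\<dots> < t^2 * (2*B + 1)"
    using t by simp
  finally have "(dist y0 x)^2 < t^2"
    using B by (simp add: mult_less_cancel_right)
  then have dt: "dist y0 x < t"
    using t by (simp add: power_less_imp_less_base)
  show ?thesis
  proof
    show "dist y0 x < \<epsilon>" using dt R by (simp add: t_def)
    fix y assume "y \<in> ball y0 t"
    then have "dist y x < R"
      using dt dist_triangle[of y x y0] by (simp add: t_def dist_commute)
    then show "?G y \<le> ?G y0" using y0(2) by (simp add: dist_commute)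
  qed (use t in auto)
qed

lemma field_le_epsilon_mult:
  fixes x y C :: real
  assumes "0 < C" "\<And>\<epsilon>. 0 < \<epsilon> \<Longrightarrow> x \<le> y + C * \<epsilon>"
  shows "x \<le> y"
proof (rule field_le_epsilon)
  fix e :: real
  assume "0 < e"
  then show "x \<le> y + e" using assms(1) assms(2)[of "e / C"] by simp
qed

lemma set_integrable_bounded:
  fixes g :: "'a \<Rightarrow> real"
  assumes "A \<in> sets M" "emeasure M A < \<infinity>" "set_borel_measurable M A g"
    and "\<And>x. x \<in> A \<Longrightarrow> \<bar>g x\<bar> \<le> K"
  shows "set_integrable M A g"
  using assms unfolding set_integrable_def set_borel_measurable_def
  by (intro integrableI_bounded_set[where A=A and B=K]) (auto simp: indicator_def)

lemma tendsto_set_integral_bounded: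
  fixes g :: "nat \<Rightarrow> 'a \<Rightarrow> real"
  assumes "A \<in> sets M" "emeasure M A < \<infinity>"
    and "\<And>n. set_borel_measurable M A (g n)" "set_borel_measurable M A h"
    and "\<And>n x. x \<in> A \<Longrightarrow> \<bar>g n x\<bar> \<le> K" "\<And>x. x \<in> A \<Longrightarrow> (\<lambda>n. g n x) \<longlonglongrightarrow> h x"
  shows "(\<lambda>n. LINT x:A|M. g n x) \<longlonglongrightarrow> (LINT x:A|M. h x)"
  unfolding set_lebesgue_integral_def
proof (rule integral_dominated_convergence[where w="\<lambda>x. indicator A x *\<^sub>R K"])
  show "integrable M (\<lambda>x. indicator A x *\<^sub>R K)"
    using assms(1,2) by (rule integrable_indicator)
  show "(\<lambda>x. indicator A x *\<^sub>R h x) \<in> borel_measurable M"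
    "\<And>n. (\<lambda>x. indicator A x *\<^sub>R g n x) \<in> borel_measurable M"
    using assms(3,4) by (simp_all add: set_borel_measurable_def)
  show "AE x in M. (\<lambda>n. indicator A x *\<^sub>R g n x) \<longlonglongrightarrow> indicator A x *\<^sub>R h x"
    using assms(6) by (auto simp: indicator_def)
  show "\<And>n. AE x in M. norm (indicator A x *\<^sub>R g n x) \<le> indicator A x *\<^sub>R K"
    using assms(5) by (auto simp: indicator_def)
qed

lemma set_borel_measurable_section:
  fixes h :: "'a::euclidean_space \<Rightarrow> 'b::euclidean_space \<Rightarrow> real"
  assumes "set_borel_measurable lborel (A \<times> B) (\<lambda>(x, y). h x y)" "x \<in> A"
  shows "set_borel_measurable lborel B (h x)"
proof -
  have "(\<lambda>p. indicator (A \<times> B) p *\<^sub>R (case p of (x, y) \<Rightarrow> h x y)) \<in> borel_measurable (lborel \<Otimes>\<^sub>M lborel)"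
    using assms(1) unfolding set_borel_measurable_def lborel_prod .
  from measurable_Pair2[OF this, of x]
  have "(\<lambda>y. indicator (A \<times> B) (x, y) *\<^sub>R h x y) \<in> borel_measurable lborel" by simp
  moreover have "(\<lambda>y. indicator (A \<times> B) (x, y) *\<^sub>R h x y) = (\<lambda>y. indicator B y *\<^sub>R h x y)"
    using assms(2) by (auto simp: indicator_def)
  ultimately show ?thesis unfolding set_borel_measurable_def by simp
qed

definition coupling :: "(real \<Rightarrow> real \<Rightarrow> real) \<Rightarrow> real set \<Rightarrow> (real \<Rightarrow> real) \<Rightarrow> real \<Rightarrow> real" where
  "coupling k I w \<xi> = (LINT \<eta>:I|lborel. k \<xi> \<eta> * (w \<xi> - w \<eta>))"

lemma nl_op_eq_coupling:
  "nl_op \<alpha> F k I v x \<xi> p = \<alpha> * v x \<xi> + F x p \<xi> + coupling k I (v x) \<xi>"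
  by (simp add: nl_op_def coupling_def)

lemma visc_solD:
  assumes "visc_sol \<alpha> F k f I v"
  shows visc_sol_continuous: "\<xi> \<in> I \<Longrightarrow> continuous_on UNIV (\<lambda>x. v x \<xi>)"
    and visc_sol_periodic: "\<xi> \<in> I \<Longrightarrow> zd_periodic (\<lambda>x. v x \<xi>)"
    and visc_sol_measurable: "set_borel_measurable lborel I (v x)"
    and visc_sol_subsol: "visc_subsol \<alpha> F k f I v"
    and visc_sol_supersol: "visc_supersol \<alpha> F k f I v"
  using assms unfolding visc_sol_def by auto

lemma visc_sol_bounded:
  assumes "visc_sol \<alpha> F k f I v"
  obtains B where "\<And>x \<xi>. \<xi> \<in> I \<Longrightarrow> \<bar>v x \<xi>\<bar> \<le> B"
  using assms unfolding visc_sol_def by blast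

lemma C1_test_const: "C1_test (\<lambda>_. c) (\<lambda>_. 0 :: real^'d)"
  by (simp add: C1_test_def zd_periodic_def)

lemma visc_supersol_at_min:
  assumes "visc_supersol \<alpha> F k f I v" "\<xi> \<in> I" "\<And>y. v x0 \<xi> \<le> v y \<xi>"
  shows "f x0 \<xi> \<le> \<alpha> * v x0 \<xi> + F x0 0 \<xi> + coupling k I (v x0) \<xi>"
proof -
  have "\<exists>e>0. \<forall>y\<in>ball x0 e. v y \<xi> - 0 \<ge> v x0 \<xi> - 0"
    using assms(3) by (intro exI[of _ 1]) simp
  then show ?thesis
    using assms(1,2) C1_test_const[of 0]
    unfolding visc_supersol_def nl_op_eq_coupling by fastforce
qed

lemma visc_subsol_at_local_max:
  assumes "visc_subsol \<alpha> F k f I v" "\<xi> \<in> I" "C1_test \<phi> D\<phi>" "0 < e"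
    and "\<And>y. y \<in> ball x0 e \<Longrightarrow> v y \<xi> - \<phi> y \<le> v x0 \<xi> - \<phi> x0"
  shows "\<alpha> * v x0 \<xi> + F x0 (D\<phi> x0) \<xi> + coupling k I (v x0) \<xi> \<le> f x0 \<xi>"
  using assms unfolding visc_subsol_def nl_op_eq_coupling by blast

lemma visc_sol_coupled_subsol_near:
  fixes v :: "real^'d \<Rightarrow> real \<Rightarrow> real"
  assumes sol: "visc_sol \<alpha> F k f I v" and F_nonneg: "\<And>x p. 0 \<le> F x p \<xi>"
    and "\<xi> \<in> I" "0 < \<epsilon>"
  obtains y where "dist y x < \<epsilon>" "\<alpha> * v y \<xi> + coupling k I (v y) \<xi> \<le> f y \<xi>"
proof -
  obtain B where B: "\<And>x. \<bar>v x \<xi>\<bar> \<le> B"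
    using visc_sol_bounded[OF sol] \<open>\<xi> \<in> I\<close> by metis
  obtain s y0 e where near: "dist y0 x < \<epsilon>" and "0 < e"
    and max: "\<And>y. y \<in> ball y0 e \<Longrightarrow> v y \<xi> - periodic_penalty s x y \<le> v y0 \<xi> - periodic_penalty s x y0"
    by (rule exists_penalized_local_max[OF visc_sol_continuous[OF sol \<open>\<xi> \<in> I\<close>] B \<open>0 < \<epsilon>\<close>,
          where x=x]) blast
  have "\<alpha> * v y0 \<xi> + F y0 (periodic_penalty_grad s x y0) \<xi> + coupling k I (v y0) \<xi> \<le> f y0 \<xi>"
    by (rule visc_subsol_at_local_max[OF visc_sol_subsol[OF sol] \<open>\<xi> \<in> I\<close>
          C1_test_periodic_penalty \<open>0 < e\<close> max])
  then show ?thesis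
    using that[OF near] F_nonneg[of y0 "periodic_penalty_grad s x y0"] by linarith
qed

locale bounded_kernel =
  fixes I :: "real set" and k :: "real \<Rightarrow> real \<Rightarrow> real" and k1 :: real
  assumes sets_I: "I \<in> sets lborel" and finite_I: "emeasure lborel I < \<infinity>"
    and measurable_k: "\<And>\<xi>. \<xi> \<in> I \<Longrightarrow> set_borel_measurable lborel I (k \<xi>)"
    and k_nonneg: "\<And>\<xi> \<eta>. \<xi> \<in> I \<Longrightarrow> \<eta> \<in> I \<Longrightarrow> 0 \<le> k \<xi> \<eta>"
    and k_le: "\<And>\<xi> \<eta>. \<xi> \<in> I \<Longrightarrow> \<eta> \<in> I \<Longrightarrow> k \<xi> \<eta> \<le> k1"
begin

lemma set_lebesgue_integral_const: "(LINT \<eta>:I|lborel. c) = measure lborel I * c"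
  by (simp add: set_integral_const[OF sets_I less_imp_neq[OF finite_I]])

lemma set_integrable_const: "set_integrable lborel I (\<lambda>_. c :: real)"
  using sets_I by (intro set_integrable_bounded[OF sets_I finite_I, where K="\<bar>c\<bar>"])
    (simp_all add: set_borel_measurable_def)

lemma set_borel_measurable_coupling_integrand:
  assumes "set_borel_measurable lborel I w" "\<xi> \<in> I"
  shows "set_borel_measurable lborel I (\<lambda>\<eta>. k \<xi> \<eta> * (c - w \<eta>))"
proof -
  have "(\<lambda>\<eta>. indicator I \<eta> *\<^sub>R (k \<xi> \<eta> * (c - w \<eta>))) =
        (\<lambda>\<eta>. (indicator I \<eta> *\<^sub>R k \<xi> \<eta>) * (c - indicator I \<eta> *\<^sub>R w \<eta>))"
    by (auto simp: indicator_def)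
  then show ?thesis
    using assms measurable_k unfolding set_borel_measurable_def by simp
qed

lemma set_integrable_coupling_integrand:
  assumes "set_borel_measurable lborel I w" "\<And>\<eta>. \<eta> \<in> I \<Longrightarrow> \<bar>w \<eta>\<bar> \<le> B" "\<xi> \<in> I"
  shows "set_integrable lborel I (\<lambda>\<eta>. k \<xi> \<eta> * (c - w \<eta>))"
proof (rule set_integrable_bounded[OF sets_I finite_I set_borel_measurable_coupling_integrand])
  fix \<eta>
  assume "\<eta> \<in> I"
  then have "\<bar>k \<xi> \<eta>\<bar> \<le> k1" "\<bar>c - w \<eta>\<bar> \<le> \<bar>c\<bar> + B"
    using k_nonneg k_le assms(2,3) abs_triangle_ineq4[of c "w \<eta>"] by force+
  then show "\<bar>k \<xi> \<eta> * (c - w \<eta>)\<bar> \<le> k1 * (\<bar>c\<bar> + B)"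
    unfolding abs_mult by (intro mult_mono) auto
qed (use assms in auto)

lemma coupling_le:
  assumes "set_borel_measurable lborel I w" "\<And>\<eta>. \<eta> \<in> I \<Longrightarrow> \<bar>w \<eta>\<bar> \<le> B" "\<xi> \<in> I"
    and "0 \<le> \<epsilon>" "\<And>\<eta>. \<eta> \<in> I \<Longrightarrow> w \<xi> - w \<eta> \<le> \<epsilon>"
  shows "coupling k I w \<xi> \<le> measure lborel I * (k1 * \<epsilon>)"
proof -
  have "coupling k I w \<xi> \<le> (LINT \<eta>:I|lborel. k1 * \<epsilon>)"
    unfolding coupling_def
  proof (rule set_integral_mono[OF set_integrable_coupling_integrand[OF assms(1-3)] set_integrable_const])
    fix \<eta>
    assume "\<eta> \<in> I"
    then have "k \<xi> \<eta> * (w \<xi> - w \<eta>) \<le> k \<xi> \<eta> * \<epsilon>"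
      using k_nonneg assms(3,5) by (intro mult_left_mono) auto
    also have "\<dots> \<le> k1 * \<epsilon>"
      using k_le \<open>\<eta> \<in> I\<close> assms(3,4) by (intro mult_right_mono) auto
    finally show "k \<xi> \<eta> * (w \<xi> - w \<eta>) \<le> k1 * \<epsilon>" .
  qed
  then show ?thesis by (simp add: set_lebesgue_integral_const mult_ac)
qed

lemma coupling_ge_AE:
  assumes "set_borel_measurable lborel I w" "\<And>\<eta>. \<eta> \<in> I \<Longrightarrow> \<bar>w \<eta>\<bar> \<le> B" "\<xi> \<in> I"
    and "0 \<le> \<epsilon>" "AE \<eta> in lborel. \<eta> \<in> I \<longrightarrow> - \<epsilon> \<le> w \<xi> - w \<eta>"
  shows "- (measure lborel I * (k1 * \<epsilon>)) \<le> coupling k I w \<xi>"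
proof -
  have "(LINT \<eta>:I|lborel. - (k1 * \<epsilon>)) \<le> coupling k I w \<xi>"
    unfolding coupling_def
  proof (rule set_integral_mono_AE[OF set_integrable_const set_integrable_coupling_integrand[OF assms(1-3)]])
    show "AE \<eta>\<in>I in lborel. - (k1 * \<epsilon>) \<le> k \<xi> \<eta> * (w \<xi> - w \<eta>)"
      using assms(5)
    proof eventually_elim
      case (elim \<eta>)
      show ?case
      proof
        assume "\<eta> \<in> I"
        then have "k1 * (- \<epsilon>) \<le> k \<xi> \<eta> * (- \<epsilon>)"
          using k_le assms(3,4) by (intro mult_right_mono_neg) auto
        also have "\<dots> \<le> k \<xi> \<eta> * (w \<xi> - w \<eta>)"
          using k_nonneg elim \<open>\<eta> \<in> I\<close> assms(3) by (intro mult_left_mono) auto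
        finally show "- (k1 * \<epsilon>) \<le> k \<xi> \<eta> * (w \<xi> - w \<eta>)" by simp
      qed
    qed
  qed
  then show ?thesis by (simp add: set_lebesgue_integral_const)
qed

lemma tendsto_coupling:
  assumes "\<And>n. set_borel_measurable lborel I (W n)" "set_borel_measurable lborel I w"
    and "\<And>n \<eta>. \<eta> \<in> I \<Longrightarrow> \<bar>W n \<eta>\<bar> \<le> B" "\<And>\<eta>. \<eta> \<in> I \<Longrightarrow> (\<lambda>n. W n \<eta>) \<longlonglongrightarrow> w \<eta>"
    and "\<xi> \<in> I"
  shows "(\<lambda>n. coupling k I (W n) \<xi>) \<longlonglongrightarrow> coupling k I w \<xi>"
  unfolding coupling_def
proof (rule tendsto_set_integral_bounded[OF sets_I finite_I, where K="k1 * (2*B)"])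
  fix n \<eta>
  assume "\<eta> \<in> I"
  then have "\<bar>k \<xi> \<eta>\<bar> \<le> k1" "\<bar>W n \<xi> - W n \<eta>\<bar> \<le> 2*B"
    using k_nonneg k_le assms(3)[of \<xi> n] assms(3)[of \<eta> n] assms(5)
      abs_triangle_ineq4[of "W n \<xi>" "W n \<eta>"] by force+
  then show "\<bar>k \<xi> \<eta> * (W n \<xi> - W n \<eta>)\<bar> \<le> k1 * (2*B)"
    unfolding abs_mult by (intro mult_mono) auto
qed (use assms set_borel_measurable_coupling_integrand in \<open>auto intro!: tendsto_intros\<close>)

lemma visc_sol_nonneg:
  fixes v :: "real^'d \<Rightarrow> real \<Rightarrow> real"
  assumes sol: "visc_sol \<alpha> F k f I v" and "0 < \<alpha>"
    and F_zero: "\<And>x \<xi>. \<xi> \<in> I \<Longrightarrow> F x 0 \<xi> = 0"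
    and f_nonneg: "\<And>x \<xi>. \<xi> \<in> I \<Longrightarrow> 0 \<le> f x \<xi>"
    and "\<xi> \<in> I"
  shows "0 \<le> v x \<xi>"
proof -
  obtain B where B: "\<And>x \<xi>. \<xi> \<in> I \<Longrightarrow> \<bar>v x \<xi>\<bar> \<le> B"
    using visc_sol_bounded[OF sol] by blast
  define S where "S = {v x \<xi> | x \<xi>. \<xi> \<in> I}"
  have "- B \<le> v x \<xi>" if "\<xi> \<in> I" for x \<xi>
    using B[of \<xi> x] that by (simp add: abs_le_iff)
  then have "bdd_below S"
    unfolding S_def by (intro bdd_belowI[of _ "- B"]) auto
  then have Inf_le: "Inf S \<le> v x \<xi>" if "\<xi> \<in> I" for x \<xi>
    using that unfolding S_def by (intro cInf_lower) auto
  have "0 \<le> k1" using k_nonneg k_le \<open>\<xi> \<in> I\<close> by (meson order_trans)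
  have "0 \<le> \<alpha> * Inf S"
  proof (rule field_le_epsilon_mult[where C="\<alpha> + measure lborel I * k1"])
    show "0 < \<alpha> + measure lborel I * k1"
      using \<open>0 < \<alpha>\<close> \<open>0 \<le> k1\<close> by (simp add: add_pos_nonneg)
    fix \<epsilon> :: real
    assume "0 < \<epsilon>"
    have "S \<noteq> {}" using \<open>\<xi> \<in> I\<close> unfolding S_def by blast
    from cInf_lessD[OF this, of "Inf S + \<epsilon>"] \<open>0 < \<epsilon>\<close>
    obtain x1 \<xi>1 where \<xi>1: "\<xi>1 \<in> I" and x1: "v x1 \<xi>1 < Inf S + \<epsilon>"
      unfolding S_def by auto
    obtain x0 where x0: "\<And>y. v x0 \<xi>1 \<le> v y \<xi>1"
      using zd_periodic_attains_inf visc_sol_continuous[OF sol \<xi>1] visc_sol_periodic[OF sol \<xi>1]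
      by blast
    have "0 \<le> \<alpha> * v x0 \<xi>1 + coupling k I (v x0) \<xi>1"
      using visc_supersol_at_min[OF visc_sol_supersol[OF sol] \<xi>1 x0] F_zero[OF \<xi>1] f_nonneg[OF \<xi>1, of x0] by simp
    also have "coupling k I (v x0) \<xi>1 \<le> measure lborel I * (k1 * \<epsilon>)"
    proof (rule coupling_le[OF visc_sol_measurable[OF sol] B \<xi>1])
      fix \<eta>
      assume "\<eta> \<in> I"
      then show "v x0 \<xi>1 - v x0 \<eta> \<le> \<epsilon>"
        using x0[of x1] x1 Inf_le[of \<eta> x0] by linarith
    qed (use \<open>0 < \<epsilon>\<close> in auto)
    also have "\<alpha> * v x0 \<xi>1 \<le> \<alpha> * (Inf S + \<epsilon>)"
      using x0[of x1] x1 \<open>0 < \<alpha>\<close> by simp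
    finally show "0 \<le> \<alpha> * Inf S + (\<alpha> + measure lborel I * k1) * \<epsilon>"
      by (simp add: algebra_simps)
  qed
  then show ?thesis
    using Inf_le[OF \<open>\<xi> \<in> I\<close>, of x] \<open>0 < \<alpha>\<close> by (simp add: zero_le_mult_iff)
qed

lemma visc_sol_coupled_subsol:
  fixes v :: "real^'d \<Rightarrow> real \<Rightarrow> real"
  assumes sol: "visc_sol \<alpha> F k f I v" and F_nonneg: "\<And>x p. 0 \<le> F x p \<xi>"
    and f_cont: "continuous_on UNIV (\<lambda>x. f x \<xi>)" and "\<xi> \<in> I"
  shows "\<alpha> * v x \<xi> + coupling k I (v x) \<xi> \<le> f x \<xi>"
proof -
  obtain B where B: "\<And>x \<xi>. \<xi> \<in> I \<Longrightarrow> \<bar>v x \<xi>\<bar> \<le> B"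
    using visc_sol_bounded[OF sol] by blast
  have "\<forall>n. \<exists>y. dist y x < inverse (Suc n) \<and> \<alpha> * v y \<xi> + coupling k I (v y) \<xi> \<le> f y \<xi>"
  proof
    fix n
    show "\<exists>y. dist y x < inverse (Suc n) \<and> \<alpha> * v y \<xi> + coupling k I (v y) \<xi> \<le> f y \<xi>"
      by (rule visc_sol_coupled_subsol_near[OF sol F_nonneg \<open>\<xi> \<in> I\<close>, of "inverse (Suc n)" x])
        auto
  qed
  from choice[OF this] obtain Y
    where Y: "\<And>n. dist (Y n) x < inverse (Suc n) \<and>
      \<alpha> * v (Y n) \<xi> + coupling k I (v (Y n)) \<xi> \<le> f (Y n) \<xi>"
    by blast
  have "(\<lambda>n. dist (Y n) x) \<longlonglongrightarrow> 0"
  proof (rule tendsto_sandwich[of "\<lambda>_. 0" _ _ "\<lambda>n. inverse (Suc n)"])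
    show "\<forall>\<^sub>F n in sequentially. dist (Y n) x \<le> inverse (Suc n)"
      using Y by (intro always_eventually allI less_imp_le) blast
    show "(\<lambda>n. inverse (real (Suc n))) \<longlonglongrightarrow> 0"
      by (rule LIMSEQ_inverse_real_of_nat)
  qed simp_all
  then have "Y \<longlonglongrightarrow> x" by (rule tendsto_dist_iff[THEN iffD2])
  have v_lim: "(\<lambda>n. v (Y n) \<eta>) \<longlonglongrightarrow> v x \<eta>" if "\<eta> \<in> I" for \<eta>
    using visc_sol_continuous[OF sol that] \<open>Y \<longlonglongrightarrow> x\<close>
    by (auto simp: continuous_on_eq_continuous_at intro: isCont_tendsto_compose)
  have "(\<lambda>n. \<alpha> * v (Y n) \<xi> + coupling k I (v (Y n)) \<xi>) \<longlonglongrightarrow> \<alpha> * v x \<xi> + coupling k I (v x) \<xi>"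
    by (intro tendsto_add tendsto_mult tendsto_const v_lim[OF \<open>\<xi> \<in> I\<close>]
        tendsto_coupling[OF visc_sol_measurable[OF sol] visc_sol_measurable[OF sol] B v_lim \<open>\<xi> \<in> I\<close>])
  moreover have "(\<lambda>n. f (Y n) \<xi>) \<longlonglongrightarrow> f x \<xi>"
    using f_cont \<open>Y \<longlonglongrightarrow> x\<close>
    by (auto simp: continuous_on_eq_continuous_at intro: isCont_tendsto_compose)
  ultimately show ?thesis
    by (rule LIMSEQ_le) (use Y in blast)
qed

lemma nonpos_on_zero_set:
  assumes "0 < \<alpha>" "set_borel_measurable lborel I w" "\<And>\<eta>. \<eta> \<in> I \<Longrightarrow> \<bar>w \<eta>\<bar> \<le> B"
    and "G \<subseteq> I" "AE \<eta> in lborel. \<eta> \<in> I \<longrightarrow> \<eta> \<in> G"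
    and ineq: "\<And>\<zeta>. \<zeta> \<in> G \<Longrightarrow> \<alpha> * w \<zeta> + coupling k I w \<zeta> \<le> 0"
    and "\<xi> \<in> G"
  shows "w \<xi> \<le> 0"
proof -
  have "w \<zeta> \<le> B" if "\<zeta> \<in> G" for \<zeta>
    using assms(3)[of \<zeta>] that \<open>G \<subseteq> I\<close> by auto
  then have "bdd_above (w ` G)"
    by (intro bdd_aboveI[of _ B]) auto
  then have le_Sup: "w \<zeta> \<le> Sup (w ` G)" if "\<zeta> \<in> G" for \<zeta>
    using that by (intro cSup_upper) auto
  have "0 \<le> k1" using k_nonneg k_le \<open>\<xi> \<in> G\<close> \<open>G \<subseteq> I\<close> by (meson order_trans subsetD)
  have "\<alpha> * Sup (w ` G) \<le> 0"
  proof (rule field_le_epsilon_mult[where C="\<alpha> + measure lborel I * k1"])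
    show "0 < \<alpha> + measure lborel I * k1" using \<open>0 < \<alpha>\<close> \<open>0 \<le> k1\<close> by (simp add: add_pos_nonneg)
    fix \<delta> :: real
    assume "0 < \<delta>"
    then obtain \<zeta> where "\<zeta> \<in> G" and \<zeta>: "Sup (w ` G) - \<delta> < w \<zeta>"
      using less_cSupD[of "w ` G" "Sup (w ` G) - \<delta>"] \<open>\<xi> \<in> G\<close> by auto
    have "AE \<eta> in lborel. \<eta> \<in> I \<longrightarrow> - \<delta> \<le> w \<zeta> - w \<eta>"
      using assms(5) by eventually_elim (use le_Sup \<zeta> in force)
    then have "- (measure lborel I * (k1 * \<delta>)) \<le> coupling k I w \<zeta>"
      using \<open>\<zeta> \<in> G\<close> \<open>G \<subseteq> I\<close> \<open>0 < \<delta>\<close> by (intro coupling_ge_AE[OF assms(2,3)]) auto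
    moreover have "\<alpha> * Sup (w ` G) \<le> \<alpha> * (w \<zeta> + \<delta>)"
      using \<zeta> \<open>0 < \<alpha>\<close> by simp
    ultimately show "\<alpha> * Sup (w ` G) \<le> 0 + (\<alpha> + measure lborel I * k1) * \<delta>"
      using ineq[OF \<open>\<zeta> \<in> G\<close>] by (simp add: algebra_simps)
  qed
  then show ?thesis
    using le_Sup[OF \<open>\<xi> \<in> G\<close>] \<open>0 < \<alpha>\<close> by (simp add: mult_le_0_iff)
qed

lemma visc_sol_eq_0_on_zero_set:
  fixes v :: "real^'d \<Rightarrow> real \<Rightarrow> real"
  assumes sol: "visc_sol \<alpha> F k f I v" and "0 < \<alpha>"
    and F_nonneg: "\<And>x p \<xi>. \<xi> \<in> I \<Longrightarrow> 0 \<le> F x p \<xi>"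
    and F_zero: "\<And>x \<xi>. \<xi> \<in> I \<Longrightarrow> F x 0 \<xi> = 0"
    and f_nonneg: "\<And>x \<xi>. \<xi> \<in> I \<Longrightarrow> 0 \<le> f x \<xi>"
    and f_cont: "\<And>\<xi>. \<xi> \<in> I \<Longrightarrow> continuous_on UNIV (\<lambda>x. f x \<xi>)"
    and ae_zero: "AE \<eta> in lborel. \<eta> \<in> I \<longrightarrow> f x \<eta> = 0"
    and "\<xi> \<in> I" "f x \<xi> = 0"
  shows "v x \<xi> = 0"
proof -
  let ?G = "{\<eta> \<in> I. f x \<eta> = 0}"
  have ae: "AE \<eta> in lborel. \<eta> \<in> I \<longrightarrow> \<eta> \<in> ?G"
    using ae_zero by eventually_elim simp
  obtain B where B: "\<And>y \<eta>. \<eta> \<in> I \<Longrightarrow> \<bar>v y \<eta>\<bar> \<le> B"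
    using visc_sol_bounded[OF sol] by blast
  have ineq: "\<alpha> * v x \<zeta> + coupling k I (v x) \<zeta> \<le> 0" if "\<zeta> \<in> ?G" for \<zeta>
  proof -
    from that have "\<zeta> \<in> I" "f x \<zeta> = 0" by simp_all
    then show ?thesis
      using visc_sol_coupled_subsol[OF sol F_nonneg f_cont, of \<zeta> x] by simp
  qed
  have "\<xi> \<in> ?G" using \<open>\<xi> \<in> I\<close> \<open>f x \<xi> = 0\<close> by simp
  have "v x \<xi> \<le> 0"
    by (rule nonpos_on_zero_set[OF \<open>0 < \<alpha>\<close> visc_sol_measurable[OF sol] B
          Collect_restrict ae ineq \<open>\<xi> \<in> ?G\<close>])
  moreover have "0 \<le> v x \<xi>"
    by (rule visc_sol_nonneg[OF sol \<open>0 < \<alpha>\<close> F_zero f_nonneg \<open>\<xi> \<in> I\<close>])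
  ultimately show ?thesis by simp
qed

end

theorem proposition4p1:
  fixes F :: "real^'d \<Rightarrow> real^'d \<Rightarrow> real \<Rightarrow> real"
    and f :: "real^'d \<Rightarrow> real \<Rightarrow> real"
    and k :: "real \<Rightarrow> real \<Rightarrow> real"
    and I :: "real set"
    and k0 k1 C1 C2 m \<alpha> :: real
    and v :: "real^'d \<Rightarrow> real \<Rightarrow> real"
  assumes I_int: "is_interval I" and I_len: "emeasure lborel I = 1"
    and k_meas: "set_borel_measurable lborel (I \<times> I) (\<lambda>(\<xi>, \<eta>). k \<xi> \<eta>)"
    and k_bds: "0 < k0" "\<forall>\<xi>\<in>I. \<forall>\<eta>\<in>I. k0 \<le> k \<xi> \<eta> \<and> k \<xi> \<eta> \<le> k1"
    and F_cont: "\<forall>\<xi>\<in>I. continuous_on UNIV (\<lambda>(x, p). F x p \<xi>)"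
    and F_meas: "\<forall>x p. set_borel_measurable lborel I (\<lambda>\<xi>. F x p \<xi>)"
    and F_per: "\<forall>p. \<forall>\<xi>\<in>I. zd_periodic (\<lambda>x. F x p \<xi>)"
    and F_bdd: "\<forall>p. \<exists>B. \<forall>x. \<forall>\<xi>\<in>I. \<bar>F x p \<xi>\<bar> \<le> B"
    and f_cont: "\<forall>\<xi>\<in>I. continuous_on UNIV (\<lambda>x. f x \<xi>)"
    and f_meas: "\<forall>x. set_borel_measurable lborel I (\<lambda>\<xi>. f x \<xi>)"
    and f_per: "\<forall>\<xi>\<in>I. zd_periodic (\<lambda>x. f x \<xi>)"
    and f_bdd: "\<exists>B. \<forall>x. \<forall>\<xi>\<in>I. \<bar>f x \<xi>\<bar> \<le> B"
    and A1: "C1 > 0" "C2 > 0" "m > 1"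
      "\<forall>x p. \<forall>\<xi>\<in>I. C1 * norm p powr m - C2 \<le> F x p \<xi>"
    and A2: "\<forall>x. \<forall>\<xi>\<in>I. f x \<xi> \<ge> 0" "\<exists>x. \<forall>\<xi>\<in>I. f x \<xi> = 0"
    and A3: "\<forall>x. \<forall>\<xi>\<in>I. convex_on UNIV (\<lambda>p. F x p \<xi>)"
    and A4: "\<forall>x p. \<forall>\<xi>\<in>I. F x p \<xi> \<ge> 0" "\<forall>x. \<forall>\<xi>\<in>I. F x 0 \<xi> = 0"
    and A5: "\<exists>\<omega>. modulus \<omega> \<and> (\<forall>x y. \<forall>\<xi>\<in>I. \<bar>f x \<xi> - f y \<xi>\<bar> \<le> \<omega> (dist x y))"
      "\<forall>R>0. \<exists>\<omega>. modulus \<omega> \<and> (\<forall>x y p q. \<forall>\<xi>\<in>I. p \<in> ball 0 R \<longrightarrow> q \<in> ball 0 R \<longrightarrow>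
            \<bar>F x p \<xi> - F y q \<xi>\<bar> \<le> \<omega> (dist x y + dist p q))"
    and alpha_pos: "\<alpha> > 0"
    and v_sol: "visc_sol \<alpha> F k f I v"
  shows "\<forall>x \<xi>. x \<in> {x. AE \<eta> in lborel. \<eta> \<in> I \<longrightarrow> f x \<eta> = 0} \<and> \<xi> \<in> I \<and> f x \<xi> = 0
            \<longrightarrow> v x \<xi> = 0"
proof -
  interpret bounded_kernel I k k1
  proof
    show "I \<in> sets lborel"
      using real_interval_borel_measurable[OF I_int] by simp
    show "emeasure lborel I < \<infinity>"
      using I_len by simp
    show "set_borel_measurable lborel I (k \<xi>)" if "\<xi> \<in> I" for \<xi>
      using k_meas that by (rule set_borel_measurable_section)
    show "0 \<le> k \<xi> \<eta>" "k \<xi> \<eta> \<le> k1" if "\<xi> \<in> I" "\<eta> \<in> I" for \<xi> \<eta>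
      using k_bds that by force+
  qed
  show ?thesis
  proof (intro allI impI)
    fix x \<xi>
    assume "x \<in> {x. AE \<eta> in lborel. \<eta> \<in> I \<longrightarrow> f x \<eta> = 0} \<and> \<xi> \<in> I \<and> f x \<xi> = 0"
    then show "v x \<xi> = 0"
      using A2(1) A4 f_cont by (intro visc_sol_eq_0_on_zero_set[OF v_sol alpha_pos]) simp_all
  qed
qed

end
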